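(* For every $q\in(0,1)$ there exists an $S$-gap shift which has the specification property and has entropy $q$.
   Context: For a nonempty set $S\subseteq\{0,1,2,\dots\}$, the $S$-gap shift $X(S)\subseteq\{0,1\}^{\mathbb{Z}}$ is the set of bi-infinite binary sequences in which the number of consecutive zeros between ones is always an element of $S$. The entropy of a shift $X$ is $h(X)=\lim_n\frac1n\log|\mathcal{B}_n(X)|$, where $\mathcal{B}_n(X)$ is the set of words of length $n$ occurring in points of $X$ and $\log$ is to base $2$. $X$ has the specification property if there is $N\ge1$ such that for all $u,v\in\mathcal{B}(X)=\bigcup_n\mathcal{B}_n(X)$ there exists $w\in\mathcal{B}_N(X)$ with $uwv\in\mathcal{B}(X)$. *)

theory Defs
  imports Complex_Main
begin

definition gap_shift :: "nat set \<Rightarrow> (int \<Rightarrow> nat) set" where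
  "gap_shift S = {x. (\<forall>i. x i \<in> {0, 1}) \<and>
     (\<forall>i j. i < j \<and> x i = 1 \<and> x j = 1 \<and> (\<forall>k. i < k \<and> k < j \<longrightarrow> x k = 0)
        \<longrightarrow> nat (j - i - 1) \<in> S)}"

definition blocks :: "(int \<Rightarrow> nat) set \<Rightarrow> nat \<Rightarrow> nat list set" where
  "blocks X n = {map (\<lambda>k. x (i + int k)) [0..<n] | x i. x \<in> X}"

definition language :: "(int \<Rightarrow> nat) set \<Rightarrow> nat list set" where
  "language X = (\<Union>n. blocks X n)"

definition has_entropy :: "(int \<Rightarrow> nat) set \<Rightarrow> real \<Rightarrow> bool" where
  "has_entropy X h \<longleftrightarrow>
     (\<lambda>n. log 2 (real (card (blocks X n))) / real n) \<longlonglongrightarrow> h"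

definition has_specification :: "(int \<Rightarrow> nat) set \<Rightarrow> bool" where
  "has_specification X \<longleftrightarrow> (\<exists>N\<ge>1. \<forall>u\<in>language X. \<forall>v\<in>language X.
      \<exists>w\<in>blocks X N. u @ w @ v \<in> language X)"

end

theory Submission
  imports Defs "HOL-Real_Asymp.Real_Asymp"
begin

(* A word of the S-gap shift is a run of zeros followed by blocks 1 0^s with s in S, the
   last block possibly cut short. The words of length m+1 that begin with 1 therefore satisfy
   the renewal recurrence c(m+1) = 1 + (sum over s in S, s < m, of c(m-s)). If the weights
   r^(s+1), s in S, sum to 1, induction on this recurrence bounds the number of words of
   length n above by (n+1)^2 r^(-n) and, for every r' > r, below by a constant times r'^(-n),
   so the entropy is -log2 r.

   For r = 2^(-q) in (1/2, 1) the gap set is the lazy expansion of 1 in base 1/r: the gap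
   m+1 is taken only when the part of 1 not yet covered is at least the weight of all later
   candidates. The weights then sum to exactly 1, and since the rescaled remainder stays
   between two positive constants, S has bounded gaps. Together with 0 in S this gives
   specification: u and v are joined by 0^a 1...1 0^c with a, c < D chosen so that the two
   outer gaps lie in S. *)

section \<open>The language of a gap shift\<close>

definition lead_zeros :: "nat list \<Rightarrow> nat" where
  "lead_zeros w = length (takeWhile (\<lambda>x. x \<noteq> 1) w)"

definition trail_zeros :: "nat list \<Rightarrow> nat" where
  "trail_zeros w = lead_zeros (rev w)"

fun gap_word :: "nat set \<Rightarrow> nat list \<Rightarrow> bool" where
  "gap_word S [] = True"
| "gap_word S (a # w) =
     ((a = 0 \<or> a = 1) \<and> gap_word S w \<and> (a = 1 \<and> 1 \<in> set w \<longrightarrow> lead_zeros w \<in> S))"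

lemma lead_zeros_append:
  "lead_zeros (u @ v) = (if 1 \<in> set u then lead_zeros u else length u + lead_zeros v)"
  unfolding lead_zeros_def by (induction u) auto

lemma lead_zeros_Cons_1 [simp]: "lead_zeros (Suc 0 # w) = 0"
  unfolding lead_zeros_def by simp

lemma lead_zeros_replicate_1 [simp]: "lead_zeros (replicate n (Suc 0)) = 0"
  unfolding lead_zeros_def by (cases n) auto

lemma lead_zeros_replicate_0: "lead_zeros (replicate n 0 @ v) = n + lead_zeros v"
  by (simp add: lead_zeros_append)

lemma trail_zeros_Cons:
  "trail_zeros (a # u) =
     (if 1 \<in> set u then trail_zeros u else if a = 1 then length u else Suc (length u))"
  unfolding trail_zeros_def by (simp add: lead_zeros_append) (simp add: lead_zeros_def)

lemma gap_word_append:
  "gap_word S (u @ v) \<longleftrightarrow> gap_word S u \<and> gap_word S v \<and>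
     (1 \<in> set u \<and> 1 \<in> set v \<longrightarrow> trail_zeros u + lead_zeros v \<in> S)"
  by (induction u) (auto simp: lead_zeros_append trail_zeros_Cons)

lemma gap_word_set: "gap_word S w \<Longrightarrow> set w \<subseteq> {0, 1}"
  by (induction w) auto

lemma gap_word_replicate_0: "gap_word S (replicate n 0)"
  by (induction n) auto

lemma gap_word_replicate_1: "0 \<in> S \<Longrightarrow> gap_word S (replicate n 1)"
  by (induction n) (auto simp: lead_zeros_def)

lemma lead_zeros_eqI:
  assumes "p < length w" "w ! p = 1" "\<forall>k<p. w ! k \<noteq> 1"
  shows "lead_zeros w = p"
proof -
  have "takeWhile (\<lambda>x. x \<noteq> 1) w = take p w"
    by (rule takeWhile_eq_take_P_nth) (use assms in auto)
  then show ?thesis using assms by (simp add: lead_zeros_def)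
qed

lemma lead_zeros_nth:
  assumes "1 \<in> set w"
  shows "lead_zeros w < length w" "w ! lead_zeros w = 1" "\<forall>k<lead_zeros w. w ! k \<noteq> 1"
proof -
  show "lead_zeros w < length w" using assms unfolding lead_zeros_def by (induction w) auto
  then show "w ! lead_zeros w = 1"
    unfolding lead_zeros_def using nth_length_takeWhile by fastforce
  show "\<forall>k<lead_zeros w. w ! k \<noteq> 1" unfolding lead_zeros_def
    by (metis (mono_tags, lifting) takeWhile_nth nth_mem set_takeWhileD)
qed

definition gap_word_nth :: "nat set \<Rightarrow> nat list \<Rightarrow> bool" where
  "gap_word_nth S w \<longleftrightarrow> (\<forall>k<length w. w ! k = 0 \<or> w ! k = 1) \<and>
     (\<forall>i j. i < j \<and> j < length w \<and> w ! i = 1 \<and> w ! j = 1 \<and>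
        (\<forall>k. i < k \<and> k < j \<longrightarrow> w ! k = 0) \<longrightarrow> j - i - 1 \<in> S)"

lemma gap_word_nth_ConsI:
  assumes "a = 0 \<or> a = 1" and w: "gap_word_nth S w"
    and first_gap: "a = 1 \<and> 1 \<in> set w \<longrightarrow> lead_zeros w \<in> S"
  shows "gap_word_nth S (a # w)"
  unfolding gap_word_nth_def
proof (intro conjI allI impI)
  fix k assume "k < length (a # w)"
  then show "(a # w) ! k = 0 \<or> (a # w) ! k = 1"
    using assms unfolding gap_word_nth_def by (cases k) auto
next
  fix i j assume P: "i < j \<and> j < length (a # w) \<and> (a # w) ! i = 1 \<and> (a # w) ! j = 1 \<and>
      (\<forall>k. i < k \<and> k < j \<longrightarrow> (a # w) ! k = 0)"
  then obtain j' where j: "j = Suc j'" by (cases j) auto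
  have between: "\<forall>k. i' < k \<and> k < j' \<longrightarrow> w ! k = 0" if "i = Suc i'" for i'
    using P j that by (metis Suc_less_eq nth_Cons_Suc)
  show "j - i - 1 \<in> S"
  proof (cases i)
    case 0
    have "w ! j' = 1" "j' < length w" using P j by auto
    moreover have "\<forall>k<j'. w ! k \<noteq> 1"
      using P 0 j by (metis Suc_less_eq nth_Cons_Suc zero_less_Suc zero_neq_one)
    ultimately have "lead_zeros w = j'" by (intro lead_zeros_eqI)
    moreover have "1 \<in> set w" using \<open>w ! j' = 1\<close> \<open>j' < length w\<close> nth_mem by fastforce
    ultimately show ?thesis using first_gap P 0 j by simp
  next
    case (Suc i')
    then show ?thesis using w P j between unfolding gap_word_nth_def by auto
  qed
qed

lemma gap_word_nth_ConsD:
  assumes "gap_word_nth S (a # w)"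
  shows "a = 0 \<or> a = 1" "gap_word_nth S w" "a = 1 \<and> 1 \<in> set w \<longrightarrow> lead_zeros w \<in> S"
proof -
  show "a = 0 \<or> a = 1" using assms unfolding gap_word_nth_def by force
  show w: "gap_word_nth S w" unfolding gap_word_nth_def
  proof (intro conjI allI impI)
    fix k assume "k < length w" then show "w ! k = 0 \<or> w ! k = 1"
      using assms unfolding gap_word_nth_def by (metis Suc_less_eq length_Cons nth_Cons_Suc)
  next
    fix i j assume P: "i < j \<and> j < length w \<and> w ! i = 1 \<and> w ! j = 1 \<and>
        (\<forall>k. i < k \<and> k < j \<longrightarrow> w ! k = 0)"
    have "\<forall>k. Suc i < k \<and> k < Suc j \<longrightarrow> (a # w) ! k = 0"
      using P by (auto simp: less_Suc_eq_0_disj)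
    then have "Suc j - Suc i - 1 \<in> S" using assms P unfolding gap_word_nth_def
      by (metis Suc_less_eq length_Cons nth_Cons_Suc)
    then show "j - i - 1 \<in> S" by simp
  qed
  show "a = 1 \<and> 1 \<in> set w \<longrightarrow> lead_zeros w \<in> S"
  proof
    assume a: "a = 1 \<and> 1 \<in> set w"
    note first_one = lead_zeros_nth[OF conjunct2[OF a]]
    have "\<forall>k. 0 < k \<and> k < Suc (lead_zeros w) \<longrightarrow> (a # w) ! k = 0"
    proof (intro allI impI)
      fix k assume "0 < k \<and> k < Suc (lead_zeros w)"
      then obtain k' where "k = Suc k'" "k' < lead_zeros w" by (cases k) auto
      moreover have "w ! k' = 0 \<or> w ! k' = 1"
        using w \<open>k' < lead_zeros w\<close> first_one(1) unfolding gap_word_nth_def by auto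
      ultimately show "(a # w) ! k = 0" using first_one(3) by auto
    qed
    then have "Suc (lead_zeros w) - 0 - 1 \<in> S" using assms first_one a unfolding gap_word_nth_def
      by (metis Suc_less_eq length_Cons nth_Cons_0 nth_Cons_Suc zero_less_Suc)
    then show "lead_zeros w \<in> S" by simp
  qed
qed

lemma gap_word_iff_nth: "gap_word S w \<longleftrightarrow> gap_word_nth S w"
proof (induction w)
  case Nil
  then show ?case by (simp add: gap_word_nth_def)
next
  case (Cons a w)
  then show ?case using gap_word_nth_ConsI gap_word_nth_ConsD by (metis gap_word.simps(2))
qed

lemma gap_word_window:
  assumes x: "x \<in> gap_shift S"
  shows "gap_word S (map (\<lambda>k. x (i + int k)) [0..<n])" (is "gap_word S ?w")
proof -
  have "gap_word_nth S ?w" unfolding gap_word_nth_def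
  proof (intro conjI allI impI)
    fix k assume "k < length ?w"
    then show "?w ! k = 0 \<or> ?w ! k = 1" using x unfolding gap_shift_def by auto
  next
    fix a b assume P: "a < b \<and> b < length ?w \<and> ?w ! a = 1 \<and> ?w ! b = 1 \<and>
        (\<forall>k. a < k \<and> k < b \<longrightarrow> ?w ! k = 0)"
    have "\<forall>k. i + int a < k \<and> k < i + int b \<longrightarrow> x k = 0"
    proof (intro allI impI)
      fix k assume K: "i + int a < k \<and> k < i + int b"
      then have "a < nat (k - i)" "nat (k - i) < b" by auto
      then have "?w ! nat (k - i) = 0" "?w ! nat (k - i) = x k" using P K by auto
      then show "x k = 0" by simp
    qed
    moreover have "i + int a < i + int b" "x (i + int a) = 1" "x (i + int b) = 1" using P by auto
    ultimately have "nat ((i + int b) - (i + int a) - 1) \<in> S"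
      using x unfolding gap_shift_def by blast
    moreover have "nat ((i + int b) - (i + int a) - 1) = b - a - 1" using P by auto
    ultimately show "b - a - 1 \<in> S" by simp
  qed
  then show ?thesis by (simp add: gap_word_iff_nth)
qed

definition zero_extension :: "nat list \<Rightarrow> int \<Rightarrow> nat" where
  "zero_extension w t = (if 0 \<le> t \<and> t < int (length w) then w ! nat t else 0)"

lemma zero_extension_in_gap_shift:
  assumes "gap_word S w"
  shows "zero_extension w \<in> gap_shift S"
proof -
  have w: "gap_word_nth S w" using assms by (simp add: gap_word_iff_nth)
  have binary: "zero_extension w t = 0 \<or> zero_extension w t = 1" for t
    using w unfolding zero_extension_def gap_word_nth_def by (auto simp: nat_less_iff)
  show ?thesis unfolding gap_shift_def
  proof (intro CollectI conjI allI impI)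
    fix t show "zero_extension w t \<in> {0, 1}" using binary[of t] by auto
  next
    fix i j
    assume "i < j \<and> zero_extension w i = 1 \<and> zero_extension w j = 1 \<and>
      (\<forall>k. i < k \<and> k < j \<longrightarrow> zero_extension w k = 0)"
    then have P: "i < j" "zero_extension w i = 1" "zero_extension w j = 1"
      "\<forall>k. i < k \<and> k < j \<longrightarrow> zero_extension w k = 0" by auto
    have ri: "0 \<le> i" "i < int (length w)" and rj: "0 \<le> j" "j < int (length w)"
      using P(2,3) unfolding zero_extension_def by (auto split: if_splits)
    have "\<forall>k. nat i < k \<and> k < nat j \<longrightarrow> w ! k = 0"
    proof (intro allI impI)
      fix k assume "nat i < k \<and> k < nat j"
      then have "i < int k \<and> int k < j" "k < length w" using ri rj by linarith+
      then show "w ! k = 0" using P(4) unfolding zero_extension_def by force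
    qed
    moreover have "w ! nat i = 1" "w ! nat j = 1"
      using P ri rj unfolding zero_extension_def by auto
    ultimately have "nat j - nat i - 1 \<in> S"
      using w P(1) ri rj unfolding gap_word_nth_def by (metis nat_less_eq_zless nat_less_iff)
    moreover have "nat (j - i - 1) = nat j - nat i - 1" using ri rj P(1) by auto
    ultimately show "nat (j - i - 1) \<in> S" by simp
  qed
qed

definition gap_words :: "nat set \<Rightarrow> nat \<Rightarrow> nat list set" where
  "gap_words S n = {w. length w = n \<and> gap_word S w}"

lemma blocks_gap_shift: "blocks (gap_shift S) n = gap_words S n"
proof (intro set_eqI iffI)
  fix w assume "w \<in> blocks (gap_shift S) n"
  then show "w \<in> gap_words S n"
    unfolding blocks_def gap_words_def using gap_word_window by auto
next
  fix w assume w: "w \<in> gap_words S n"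
  have "w = map (\<lambda>k. zero_extension w (0 + int k)) [0..<n]"
    using w by (intro nth_equalityI) (auto simp: gap_words_def zero_extension_def)
  then show "w \<in> blocks (gap_shift S) n"
    using w zero_extension_in_gap_shift unfolding blocks_def gap_words_def by blast
qed

lemma language_gap_shift: "language (gap_shift S) = {w. gap_word S w}"
  unfolding language_def blocks_gap_shift gap_words_def by auto

lemma has_specification_gap_shift:
  assumes "0 \<in> S" and syndetic: "\<forall>t. \<exists>a<D. t + a \<in> S"
  shows "has_specification (gap_shift S)"
  unfolding has_specification_def
proof (intro exI[of _ "2 * D + 1"] conjI ballI)
  fix u v assume "u \<in> language (gap_shift S)" "v \<in> language (gap_shift S)"
  then have u: "gap_word S u" and v: "gap_word S v" by (auto simp: language_gap_shift)
  obtain a where a: "a < D" "trail_zeros u + a \<in> S" using syndetic by blast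
  obtain c where c: "c < D" "c + lead_zeros v \<in> S" using syndetic by (metis add.commute)
  define w where "w = replicate a 0 @ replicate (Suc (2 * D - a - c)) 1 @ replicate c (0::nat)"
  have "gap_word S (replicate (Suc (2 * D - a - c)) 1)" using assms gap_word_replicate_1 by blast
  then have "gap_word S w"
    unfolding w_def gap_word_append using gap_word_replicate_0 by simp
  moreover have "trail_zeros w = c" "lead_zeros (w @ v) = a"
    unfolding w_def trail_zeros_def by (simp_all add: lead_zeros_append)
  ultimately have "gap_word S (u @ w @ v)"
    using u v a c by (simp add: gap_word_append[of S u] gap_word_append[of S w])
  moreover have "w \<in> blocks (gap_shift S) (2 * D + 1)"
    using \<open>gap_word S w\<close> a c by (simp add: blocks_gap_shift gap_words_def w_def)
  ultimately show "\<exists>w\<in>blocks (gap_shift S) (2 * D + 1). u @ w @ v \<in> language (gap_shift S)"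
    by (auto simp: language_gap_shift)
qed simp

section \<open>Counting words\<close>

definition gap_words_hd1 :: "nat set \<Rightarrow> nat \<Rightarrow> nat list set" where
  "gap_words_hd1 S n = {w \<in> gap_words S n. w \<noteq> [] \<longrightarrow> hd w = 1}"

lemma finite_gap_words: "finite (gap_words S n)"
proof (rule finite_subset)
  show "gap_words S n \<subseteq> {w. set w \<subseteq> {0, 1} \<and> length w = n}"
    unfolding gap_words_def using gap_word_set by auto
qed (rule finite_lists_length_eq, simp)

lemma gap_words_hd1_subset: "gap_words_hd1 S n \<subseteq> gap_words S n"
  unfolding gap_words_hd1_def by auto

lemma finite_gap_words_hd1: "finite (gap_words_hd1 S n)"
  using finite_subset[OF gap_words_hd1_subset finite_gap_words] .

lemma one_zeros_in_gap_words_hd1: "1 # replicate m 0 \<in> gap_words_hd1 S (Suc m)"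
  using gap_word_replicate_0[of S m] by (simp add: gap_words_hd1_def gap_words_def)

lemma card_gap_words_hd1_pos: "0 < card (gap_words_hd1 S n)"
proof -
  have "[] \<in> gap_words_hd1 S 0" by (simp add: gap_words_hd1_def gap_words_def)
  then have "gap_words_hd1 S n \<noteq> {}" using one_zeros_in_gap_words_hd1 by (cases n) auto
  then show ?thesis using finite_gap_words_hd1 by (simp add: card_gt_0_iff)
qed

lemma card_gap_words_pos: "0 < card (gap_words S n)"
  using card_gap_words_hd1_pos card_mono[OF finite_gap_words gap_words_hd1_subset]
  by (metis less_le_trans)

lemma gap_word_lead_zeros_split:
  assumes "gap_word S w"
  obtains u where "w = replicate (lead_zeros w) 0 @ u" "u \<in> gap_words_hd1 S (length u)"
    "1 \<in> set w \<Longrightarrow> u \<noteq> []"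
proof
  let ?u = "dropWhile (\<lambda>x. x \<noteq> 1) w"
  have "\<forall>y\<in>set (takeWhile (\<lambda>x. x \<noteq> 1) w). y = 0"
    using gap_word_set[OF assms] set_takeWhileD by fastforce
  then have "takeWhile (\<lambda>x. x \<noteq> 1) w = replicate (lead_zeros w) 0"
    unfolding lead_zeros_def by (rule replicate_length_same[symmetric])
  then show split: "w = replicate (lead_zeros w) 0 @ ?u"
    by (metis takeWhile_dropWhile_id)
  have "gap_word S ?u" using assms gap_word_append by (metis split)
  then show "?u \<in> gap_words_hd1 S (length ?u)"
    using hd_dropWhile[of "\<lambda>x. x \<noteq> 1" w] by (auto simp: gap_words_hd1_def gap_words_def)
  show "1 \<in> set w \<Longrightarrow> ?u \<noteq> []" by simp
qed

lemma gap_words_decomp: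
  assumes "w \<in> gap_words S n"
  shows "\<exists>a\<le>n. \<exists>u\<in>gap_words_hd1 S (n - a). w = replicate a 0 @ u"
proof -
  have "gap_word S w" "length w = n" using assms by (auto simp: gap_words_def)
  then obtain u where split: "w = replicate (lead_zeros w) 0 @ u" and "u \<in> gap_words_hd1 S (length u)"
    using gap_word_lead_zeros_split by blast
  moreover have "length w = lead_zeros w + length u" using arg_cong[OF split, of length] by simp
  ultimately show ?thesis using \<open>length w = n\<close> by (metis add_diff_cancel_left' le_add1)
qed

lemma gap_words_hd1_Suc_decomp:
  assumes "w \<in> gap_words_hd1 S (Suc m)"
  shows "w = 1 # replicate m 0 \<or>
    (\<exists>s\<in>S \<inter> {..<m}. \<exists>u\<in>gap_words_hd1 S (m - s). w = (1 # replicate s 0) @ u)"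
proof -
  obtain t where w: "w = 1 # t" using assms unfolding gap_words_hd1_def gap_words_def
    by (cases w) auto
  have t: "gap_word S (1 # t)" "length t = m" using assms w
    unfolding gap_words_hd1_def gap_words_def by auto
  show ?thesis
  proof (cases "1 \<in> set t")
    case False
    then have "\<forall>y\<in>set t. y = 0" using gap_word_set[of S t] t(1) by auto
    then have "t = replicate m 0" using t(2) by (metis replicate_length_same)
    then show ?thesis using w by simp
  next
    case True
    obtain u where u: "t = replicate (lead_zeros t) 0 @ u" "u \<in> gap_words_hd1 S (length u)" "u \<noteq> []"
      using gap_word_lead_zeros_split[of S t] True t by auto
    have "length t = lead_zeros t + length u" using arg_cong[OF u(1), of length] by simp
    then have "lead_zeros t < m" "length u = m - lead_zeros t" using u(3) t(2) by auto
    moreover have "lead_zeros t \<in> S" using t True by simp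
    moreover have "w = (1 # replicate (lead_zeros t) 0) @ u" using w u(1) by simp
    ultimately show ?thesis using u(2) by auto
  qed
qed

lemma one_zeros_append_in_gap_words_hd1:
  assumes "s \<in> S" "u \<in> gap_words_hd1 S k" "u \<noteq> []"
  shows "(1 # replicate s 0) @ u \<in> gap_words_hd1 S (Suc (s + k))"
proof -
  have u: "gap_word S u" "hd u = 1" "length u = k"
    using assms unfolding gap_words_hd1_def gap_words_def by auto
  then have "1 \<in> set u" "lead_zeros u = 0" using assms(3) by (cases u; simp)+
  moreover have "gap_word S (1 # replicate s 0)" using gap_word_replicate_0[of S s] by simp
  moreover have "trail_zeros (1 # replicate s 0) = s" by (simp add: trail_zeros_Cons)
  ultimately have "gap_word S ((1 # replicate s 0) @ u)"
    using u assms(1) by (simp only: gap_word_append) simp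
  then show ?thesis using u unfolding gap_words_hd1_def gap_words_def by simp
qed

lemma one_zeros_append_inj:
  fixes u u' :: "nat list"
  assumes "(1 # replicate s 0) @ u = (1 # replicate s' 0) @ u'"
    and "u \<noteq> []" "u' \<noteq> []" "hd u = 1" "hd u' = 1"
  shows "s = s'"
proof -
  have "lead_zeros (replicate s 0 @ u) = lead_zeros (replicate s' 0 @ u')" using assms(1) by simp
  moreover have "lead_zeros u = 0" "lead_zeros u' = 0" using assms(2-5) by (cases u; cases u'; simp)+
  ultimately show ?thesis by (simp add: lead_zeros_replicate_0)
qed

lemma card_gap_words_hd1_Suc:
  "card (gap_words_hd1 S (Suc m)) = Suc (\<Sum>s\<in>S \<inter> {..<m}. card (gap_words_hd1 S (m - s)))"
proof -
  let ?A = "\<lambda>s. (\<lambda>u. (1 # replicate s 0) @ u) ` gap_words_hd1 S (m - s)"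
  have nonempty: "u \<noteq> []" "hd u = 1" if "s < m" "u \<in> gap_words_hd1 S (m - s)" for s u
    using that by (auto simp: gap_words_hd1_def gap_words_def)
  have "gap_words_hd1 S (Suc m) = insert (1 # replicate m 0) (\<Union>s\<in>S \<inter> {..<m}. ?A s)"
  proof
    show "gap_words_hd1 S (Suc m) \<subseteq> insert (1 # replicate m 0) (\<Union>s\<in>S \<inter> {..<m}. ?A s)"
      using gap_words_hd1_Suc_decomp by blast
    show "insert (1 # replicate m 0) (\<Union>s\<in>S \<inter> {..<m}. ?A s) \<subseteq> gap_words_hd1 S (Suc m)"
      using one_zeros_in_gap_words_hd1 one_zeros_append_in_gap_words_hd1 nonempty
      by clarsimp (metis add_Suc_right le_add_diff_inverse less_imp_le)
  qed
  moreover have "1 # replicate m 0 \<notin> (\<Union>s\<in>S \<inter> {..<m}. ?A s)"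
  proof
    assume "1 # replicate m 0 \<in> (\<Union>s\<in>S \<inter> {..<m}. ?A s)"
    then obtain s u where "s < m" "u \<in> gap_words_hd1 S (m - s)"
      and eq: "1 # replicate m 0 = (1 # replicate s 0) @ u" by blast
    then have "1 \<in> set u" using nonempty hd_in_set by metis
    then show False using arg_cong[OF eq, of "\<lambda>w. 1 \<in> set (tl w)"] by simp
  qed
  moreover have "?A s \<inter> ?A s' = {}" if "s < m" "s' < m" "s \<noteq> s'" for s s'
  proof (rule ccontr)
    assume "?A s \<inter> ?A s' \<noteq> {}"
    then obtain u u' where "u \<in> gap_words_hd1 S (m - s)" "u' \<in> gap_words_hd1 S (m - s')"
      and "(1 # replicate s 0) @ u = (1 # replicate s' 0) @ u'" by blast
    then have "s = s'" using one_zeros_append_inj nonempty that by metis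
    with that show False by simp
  qed
  then have "card (\<Union>s\<in>S \<inter> {..<m}. ?A s) = (\<Sum>s\<in>S \<inter> {..<m}. card (?A s))"
    by (intro card_UN_disjoint) (auto intro: finite_gap_words_hd1)
  moreover have "card (?A s) = card (gap_words_hd1 S (m - s))" for s
    by (rule card_image) (simp add: inj_on_def)
  ultimately show ?thesis using finite_gap_words_hd1 by simp
qed

lemma card_gap_words_hd1_le:
  fixes r :: real
  assumes r: "0 < r" "r \<le> 1" and weights: "\<forall>M. (\<Sum>s\<in>S \<inter> {..<M}. r^(s+1)) \<le> 1"
  shows "card (gap_words_hd1 S m) \<le> (real m + 1) * (1/r)^m"
proof (induction m rule: less_induct)
  case (less m)
  show ?case
  proof (cases m)
    case 0
    have "gap_words_hd1 S 0 = {[]}" by (auto simp: gap_words_hd1_def gap_words_def)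
    then show ?thesis using 0 by simp
  next
    case (Suc k)
    have term_le: "card (gap_words_hd1 S (k - s)) \<le> m * (1/r)^m * r^(s+1)" if "s < k" for s
    proof -
      have "k - s < m" using Suc by simp
      then have "card (gap_words_hd1 S (k - s)) \<le> (k - s + 1) * (1/r)^(m - (s+1))"
        using less[of "k - s"] Suc that by (simp add: of_nat_diff algebra_simps)
      also have "\<dots> \<le> m * ((1/r)^m * r^(s+1))"
        using Suc that r by (intro mult_mono) (auto simp: power_diff_conv_inverse)
      finally show ?thesis by (simp add: mult.assoc)
    qed
    have "card (gap_words_hd1 S m) = 1 + (\<Sum>s\<in>S \<inter> {..<k}. real (card (gap_words_hd1 S (k - s))))"
      using Suc card_gap_words_hd1_Suc by simp
    also have "\<dots> \<le> 1 + (\<Sum>s\<in>S \<inter> {..<k}. m * (1/r)^m * r^(s+1))"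
      using term_le by (intro add_left_mono sum_mono) auto
    also have "\<dots> = 1 + m * (1/r)^m * (\<Sum>s\<in>S \<inter> {..<k}. r^(s+1))"
      by (simp add: sum_distrib_left)
    also have "\<dots> \<le> 1 + m * (1/r)^m"
      using weights r by (intro add_left_mono mult_left_le) auto
    also have "\<dots> \<le> (real m + 1) * (1/r)^m"
      using r by (simp add: algebra_simps one_le_power)
    finally show ?thesis .
  qed
qed

lemma card_gap_words_hd1_ge:
  fixes r :: real
  assumes r: "0 < r" "r \<le> 1" and weights: "1 \<le> (\<Sum>s\<in>S \<inter> {..<L}. r^(s+1))"
  shows "(1/r)^m \<le> card (gap_words_hd1 S m) * (1/r)^L"
proof (induction m rule: less_induct)
  case (less m)
  show ?case
  proof (cases "m \<le> L")
    case True
    have "(1/r)^m \<le> (1/r)^L" using True r by (intro power_increasing) auto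
    also have "\<dots> \<le> card (gap_words_hd1 S m) * (1/r)^L"
    proof -
      have "1 \<le> real (card (gap_words_hd1 S m))"
        using card_gap_words_hd1_pos[of S m] by (simp add: Suc_le_eq)
      then show ?thesis using mult_right_mono[of 1 _ "(1/r)^L"] r by simp
    qed
    finally show ?thesis .
  next
    case False
    then obtain k where m: "m = Suc k" and "L \<le> k" by (cases m) auto
    have "(1/r)^m \<le> (1/r)^m * (\<Sum>s\<in>S \<inter> {..<L}. r^(s+1))"
      using weights r by simp
    also have "\<dots> = (\<Sum>s\<in>S \<inter> {..<L}. (1/r)^(m - (s+1)))"
      unfolding sum_distrib_left
      using r \<open>L \<le> k\<close> m by (intro sum.cong) (auto simp: power_diff_conv_inverse)
    also have "\<dots> \<le> (\<Sum>s\<in>S \<inter> {..<L}. card (gap_words_hd1 S (k - s)) * (1/r)^L)"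
      using less m \<open>L \<le> k\<close> by (intro sum_mono) auto
    also have "\<dots> \<le> (\<Sum>s\<in>S \<inter> {..<k}. card (gap_words_hd1 S (k - s)) * (1/r)^L)"
      using \<open>L \<le> k\<close> r by (intro sum_mono2) auto
    also have "\<dots> \<le> card (gap_words_hd1 S m) * (1/r)^L"
      using r by (simp add: m card_gap_words_hd1_Suc sum_distrib_right[symmetric])
    finally show ?thesis .
  qed
qed

lemma card_gap_words_le:
  fixes r :: real
  assumes r: "0 < r" "r \<le> 1" and weights: "\<forall>M. (\<Sum>s\<in>S \<inter> {..<M}. r^(s+1)) \<le> 1"
  shows "card (gap_words S n) \<le> (real n + 1)^2 * (1/r)^n"
proof -
  let ?A = "\<lambda>a. (\<lambda>u. replicate a 0 @ u) ` gap_words_hd1 S (n - a)"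
  have "gap_words S n \<subseteq> (\<Union>a\<in>{..n}. ?A a)" using gap_words_decomp by fastforce
  then have "card (gap_words S n) \<le> card (\<Union>a\<in>{..n}. ?A a)"
    by (intro card_mono) (auto intro: finite_gap_words_hd1)
  also have "\<dots> \<le> (\<Sum>a\<in>{..n}. card (?A a))" by (rule card_UN_le) simp
  also have "\<dots> \<le> (\<Sum>a\<in>{..n}. card (gap_words_hd1 S (n - a)))"
    by (intro sum_mono card_image_le finite_gap_words_hd1)
  finally have "card (gap_words S n) \<le> (\<Sum>a\<in>{..n}. real (card (gap_words_hd1 S (n - a))))"
    by (metis of_nat_le_iff of_nat_sum)
  also have "\<dots> \<le> (\<Sum>a\<in>{..n}. (real n + 1) * (1/r)^n)"
  proof (intro sum_mono)
    fix a assume "a \<in> {..n}"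
    then have "card (gap_words_hd1 S (n - a)) \<le> (n - a + 1) * (1/r)^(n - a)"
      using card_gap_words_hd1_le[OF r weights, of "n - a"] by (simp add: of_nat_diff algebra_simps)
    also have "\<dots> \<le> (real n + 1) * (1/r)^n"
      using r by (intro mult_mono power_increasing) auto
    finally show "card (gap_words_hd1 S (n - a)) \<le> (real n + 1) * (1/r)^n" .
  qed
  also have "\<dots> = (real n + 1)^2 * (1/r)^n" by (simp add: power2_eq_square algebra_simps)
  finally show ?thesis .
qed

lemma log_card_gap_words_le:
  fixes r :: real
  assumes r: "0 < r" "r \<le> 1" and weights: "\<forall>M. (\<Sum>s\<in>S \<inter> {..<M}. r^(s+1)) \<le> 1"
  shows "log 2 (card (gap_words S n)) \<le> 2 * log 2 (real n + 1) - n * log 2 r"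
proof -
  have "log 2 (card (gap_words S n)) \<le> log 2 ((real n + 1)^2 * (1/r)^n)"
    using card_gap_words_le[OF assms] card_gap_words_pos[of S n] by (intro log_mono) (auto simp: algebra_simps)
  also have "\<dots> = 2 * log 2 (real n + 1) - n * log 2 r"
    using r by (simp add: log_mult log_nat_power log_divide)
  finally show ?thesis .
qed

lemma log_card_gap_words_ge:
  fixes r :: real
  assumes r: "0 < r" "r \<le> 1" and weights: "1 \<le> (\<Sum>s\<in>S \<inter> {..<L}. r^(s+1))"
  shows "(real L - n) * log 2 r \<le> log 2 (card (gap_words S n))"
proof -
  have "(1/r)^n \<le> card (gap_words_hd1 S n) * (1/r)^L"
    by (rule card_gap_words_hd1_ge[OF assms])
  also have "\<dots> \<le> card (gap_words S n) * (1/r)^L"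
    using card_mono[OF finite_gap_words gap_words_hd1_subset] r by (intro mult_right_mono) auto
  finally have "log 2 ((1/r)^n) \<le> log 2 (card (gap_words S n) * (1/r)^L)"
    using r by (intro log_mono) auto
  then show ?thesis
    using r card_gap_words_pos[of S n] by (simp add: log_mult log_nat_power log_divide algebra_simps)
qed

lemma eventually_log_card_gap_words_div_less:
  fixes r :: real
  assumes r: "0 < r" "r \<le> 1" and weights: "\<forall>M. (\<Sum>s\<in>S \<inter> {..<M}. r^(s+1)) \<le> 1"
    and a: "- log 2 r < a"
  shows "eventually (\<lambda>n. log 2 (card (gap_words S n)) / n < a) sequentially"
proof -
  have "(\<lambda>n. 2 * log 2 (real n + 1) / real n) \<longlonglongrightarrow> 0" by real_asymp
  then have "eventually (\<lambda>n. 2 * log 2 (real n + 1) / real n < a + log 2 r) sequentially"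
    using a by (intro order_tendstoD) auto
  then show ?thesis using eventually_gt_at_top[of 0]
  proof eventually_elim
    case (elim n)
    have "log 2 (card (gap_words S n)) / n \<le> (2 * log 2 (real n + 1) - n * log 2 r) / n"
      using log_card_gap_words_le[OF assms(1-3)] elim by (intro divide_right_mono) auto
    also have "\<dots> = 2 * log 2 (real n + 1) / n - log 2 r" using elim by (simp add: field_simps)
    finally show ?case using elim by simp
  qed
qed

lemma eventually_less_log_card_gap_words_div:
  fixes r :: real
  assumes r: "0 < r" "r \<le> 1" and weights: "1 \<le> (\<Sum>s\<in>S \<inter> {..<L}. r^(s+1))"
    and a: "a < - log 2 r"
  shows "eventually (\<lambda>n. a < log 2 (card (gap_words S n)) / n) sequentially"
proof -
  define q where "q = - log 2 r"
  have "(\<lambda>n. q - L * q / real n) \<longlonglongrightarrow> q" by real_asymp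
  then have "eventually (\<lambda>n. a < q - L * q / real n) sequentially"
    using a by (intro order_tendstoD) (auto simp: q_def)
  then show ?thesis using eventually_gt_at_top[of 0]
  proof eventually_elim
    case (elim n)
    have "n * q - L * q \<le> log 2 (card (gap_words S n))"
      using log_card_gap_words_ge[OF assms(1-3), of n] by (simp add: q_def algebra_simps)
    then have "(n * q - L * q) / n \<le> log 2 (card (gap_words S n)) / n"
      using elim by (intro divide_right_mono) auto
    moreover have "(n * q - L * q) / n = q - L * q / n" using elim by (simp add: field_simps)
    ultimately show ?case using elim by simp
  qed
qed

lemma has_entropy_gap_shift:
  fixes r :: real
  assumes r: "0 < r" "r < 1"
    and weights_le: "\<forall>M. (\<Sum>s\<in>S \<inter> {..<M}. r^(s+1)) \<le> 1"
    and weights_ge: "\<forall>r'>r. \<exists>L. 1 \<le> (\<Sum>s\<in>S \<inter> {..<L}. r'^(s+1))"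
  shows "has_entropy (gap_shift S) (- log 2 r)"
  unfolding has_entropy_def blocks_gap_shift
proof (rule order_tendstoI)
  fix a assume "- log 2 r < a"
  then show "eventually (\<lambda>n. log 2 (card (gap_words S n)) / n < a) sequentially"
    using r weights_le by (intro eventually_log_card_gap_words_div_less) auto
next
  fix a assume a: "a < - log 2 r"
  define q where "q = max ((a - log 2 r) / 2) (- log 2 r / 2)"
  have "0 < - log 2 r" using r by simp
  then have q: "a < q" "0 < q" "q < - log 2 r" using a unfolding q_def by (auto simp: max_def)
  then have "r < 2 powr (- q)" "2 powr (- q) < 1"
    using r by (auto simp: less_powr_iff powr_less_one)
  then obtain L where "1 \<le> (\<Sum>s\<in>S \<inter> {..<L}. (2 powr (- q))^(s+1))"
    using weights_ge by blast
  then show "eventually (\<lambda>n. a < log 2 (card (gap_words S n)) / n) sequentially"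
    using q \<open>2 powr (- q) < 1\<close> by (intro eventually_less_log_card_gap_words_div) auto
qed

section \<open>The lazy expansion of 1 in base 1/r\<close>

(* lazy_rem r m * r^(m+2) is the part of 1 not covered by the weights r^(s+1) of the gaps
   s <= m chosen so far (lemma sum_lazy_gaps); the gap m+1 is chosen exactly when this
   remainder is at least r^(m+3)/(1-r), the total weight of all gaps beyond m+1. *)
primrec lazy_rem :: "real \<Rightarrow> nat \<Rightarrow> real" where
  "lazy_rem r 0 = (1 - r) / r^2"
| "lazy_rem r (Suc k) =
     (if r / (1 - r) \<le> lazy_rem r k then (lazy_rem r k - 1) / r else lazy_rem r k / r)"

definition lazy_gaps :: "real \<Rightarrow> nat set" where
  "lazy_gaps r = insert 0 {Suc m | m. r / (1 - r) \<le> lazy_rem r m}"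

definition lazy_rem_lower :: "real \<Rightarrow> real" where
  "lazy_rem_lower r = min ((r / (1 - r) - 1) / r) ((1 - r) / r^2)"

lemma zero_in_lazy_gaps: "0 \<in> lazy_gaps r"
  by (simp add: lazy_gaps_def)

lemma Suc_in_lazy_gaps_iff: "Suc m \<in> lazy_gaps r \<longleftrightarrow> r / (1 - r) \<le> lazy_rem r m"
  by (simp add: lazy_gaps_def)

context
  fixes r :: real
  assumes r_gt: "1/2 < r" and r_lt: "r < 1"
begin

lemma lazy_rem_lower_pos: "0 < lazy_rem_lower r"
proof -
  have "1 < r / (1 - r)" using r_gt r_lt by (simp add: field_simps)
  then show ?thesis using r_gt r_lt unfolding lazy_rem_lower_def by simp
qed

lemma lazy_rem_bounds: "lazy_rem_lower r \<le> lazy_rem r k \<and> lazy_rem r k \<le> 1 / (1 - r)"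
proof (induction k)
  case 0
  have "(1 - r)^2 \<le> r^2" using r_gt r_lt by (simp add: power2_eq_square mult_mono)
  then have "(1 - r) / r^2 \<le> 1 / (1 - r)" using r_gt r_lt by (simp add: field_simps power2_eq_square)
  then show ?case unfolding lazy_rem_lower_def by simp
next
  case (Suc k)
  have r: "0 < r" "0 < 1 - r" using r_gt r_lt by auto
  show ?case
  proof (cases "r / (1 - r) \<le> lazy_rem r k")
    case True
    have "lazy_rem_lower r \<le> (r / (1 - r) - 1) / r" unfolding lazy_rem_lower_def by simp
    also have "\<dots> \<le> (lazy_rem r k - 1) / r" using True r by (intro divide_right_mono) auto
    finally have "lazy_rem_lower r \<le> lazy_rem r (Suc k)" using True by simp
    moreover have "(lazy_rem r k - 1) / r \<le> (1 / (1 - r) - 1) / r"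
      using Suc r by (intro divide_right_mono) auto
    moreover have "(1 / (1 - r) - 1) / r = 1 / (1 - r)" using r by (simp add: field_simps)
    ultimately show ?thesis using True by simp
  next
    case False
    have "lazy_rem r k \<le> lazy_rem r k / r"
      using Suc lazy_rem_lower_pos r r_lt by (simp add: field_simps)
    then have "lazy_rem_lower r \<le> lazy_rem r (Suc k)" using Suc False by simp
    moreover have "lazy_rem r k / r \<le> (r / (1 - r)) / r" using False r by (intro divide_right_mono) auto
    moreover have "(r / (1 - r)) / r = 1 / (1 - r)" using r by (simp add: field_simps)
    ultimately show ?thesis using False by simp
  qed
qed

lemma sum_lazy_gaps: "(\<Sum>s\<in>lazy_gaps r \<inter> {..<Suc m}. r^(s+1)) = 1 - lazy_rem r m * r^(m+2)"
proof (induction m)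
  case 0
  have "lazy_gaps r \<inter> {..<Suc 0} = {0}" using zero_in_lazy_gaps by auto
  then show ?case using r_gt by (simp add: power2_eq_square)
next
  case (Suc m)
  have r: "0 < r" using r_gt by simp
  show ?case
  proof (cases "r / (1 - r) \<le> lazy_rem r m")
    case True
    then have "lazy_gaps r \<inter> {..<Suc (Suc m)} = insert (Suc m) (lazy_gaps r \<inter> {..<Suc m})"
      using Suc_in_lazy_gaps_iff by (auto simp: lessThan_Suc)
    then have "(\<Sum>s\<in>lazy_gaps r \<inter> {..<Suc (Suc m)}. r^(s+1)) = r^(m+2) + (1 - lazy_rem r m * r^(m+2))"
      using Suc by simp
    also have "\<dots> = 1 - lazy_rem r (Suc m) * r^(Suc m + 2)" using True r by (simp add: field_simps)
    finally show ?thesis .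
  next
    case False
    then have "lazy_gaps r \<inter> {..<Suc (Suc m)} = lazy_gaps r \<inter> {..<Suc m}"
      using Suc_in_lazy_gaps_iff by (auto simp: lessThan_Suc)
    then have "(\<Sum>s\<in>lazy_gaps r \<inter> {..<Suc (Suc m)}. r^(s+1)) = 1 - lazy_rem r m * r^(m+2)"
      using Suc by simp
    also have "\<dots> = 1 - lazy_rem r (Suc m) * r^(Suc m + 2)" using False r by (simp add: field_simps)
    finally show ?thesis .
  qed
qed

lemma sum_lazy_gaps_le: "(\<Sum>s\<in>lazy_gaps r \<inter> {..<M}. r^(s+1)) \<le> 1"
proof (cases M)
  case (Suc m)
  have "0 \<le> lazy_rem r m" using lazy_rem_bounds[of m] lazy_rem_lower_pos by linarith
  then show ?thesis using sum_lazy_gaps Suc r_gt by simp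
qed simp

lemma sum_lazy_gaps_ge:
  assumes "r < r'"
  shows "\<exists>M. 1 \<le> (\<Sum>s\<in>lazy_gaps r \<inter> {..<M}. r'^(s+1))"
proof -
  have r: "0 < r" "0 < 1 - r" using r_gt r_lt by auto
  obtain n where n: "r^n < (r' - r) * (1 - r)"
    using real_arch_pow_inv[of "(r' - r) * (1 - r)" r] assms r r_lt by auto
  have "lazy_rem r n * r^(n+2) \<le> 1 / (1 - r) * r^(n+2)"
    using lazy_rem_bounds[of n] r by (intro mult_right_mono) auto
  also have "\<dots> \<le> 1 / (1 - r) * r^n" using r r_lt by (intro mult_left_mono power_decreasing) auto
  also have "\<dots> \<le> r' - r" using n r by (simp add: pos_divide_le_eq)
  finally have rem_small: "lazy_rem r n * r^(n+2) \<le> r' - r" .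
  let ?I = "lazy_gaps r \<inter> {..<Suc n}"
  have "r' - r \<le> (\<Sum>s\<in>?I. r'^(s+1) - r^(s+1))"
  proof -
    have "r^(s+1) \<le> r'^(s+1)" for s using r assms by (intro power_mono) auto
    then have "r'^(0+1) - r^(0+1) \<le> (\<Sum>s\<in>?I. r'^(s+1) - r^(s+1))"
      by (intro member_le_sum) (auto simp: zero_in_lazy_gaps)
    then show ?thesis by simp
  qed
  then have "1 \<le> (\<Sum>s\<in>?I. r'^(s+1))"
    using sum_lazy_gaps[of n] rem_small by (simp add: sum_subtractf)
  then show ?thesis by blast
qed

lemma lazy_rem_skip:
  assumes "\<forall>i<j. lazy_rem r (t + i) < r / (1 - r)"
  shows "lazy_rem r (t + j) = lazy_rem r t / r^j"
  using assms by (induction j) (auto simp: not_le)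

lemma lazy_gaps_syndetic: "\<exists>D. \<forall>t. \<exists>a<D. t + a \<in> lazy_gaps r"
proof -
  have r: "0 < r" "0 < 1 - r" using r_gt r_lt by auto
  obtain K where K: "r^K < lazy_rem_lower r / (r / (1 - r))"
    using real_arch_pow_inv[of "lazy_rem_lower r / (r / (1 - r))" r] lazy_rem_lower_pos r r_lt by auto
  have hit: "\<exists>j\<le>K. r / (1 - r) \<le> lazy_rem r (t + j)" for t
  proof (rule ccontr)
    assume none: "\<not> ?thesis"
    have "0 < r / (1 - r)" using r by simp
    then have "r / (1 - r) \<le> lazy_rem_lower r / r^K"
      using K r by (simp add: pos_less_divide_eq pos_le_divide_eq pos_divide_le_eq mult.commute)
    also have "\<dots> \<le> lazy_rem r t / r^K"
      using lazy_rem_bounds[of t] r by (intro divide_right_mono) auto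
    also have "\<dots> = lazy_rem r (t + K)"
      using none by (intro lazy_rem_skip[symmetric]) (meson less_imp_le not_le)
    finally show False using none by auto
  qed
  have "\<exists>a<K + 2. t + a \<in> lazy_gaps r" for t
  proof -
    obtain j where "j \<le> K" "r / (1 - r) \<le> lazy_rem r (t + j)" using hit by blast
    then have "t + Suc j \<in> lazy_gaps r" by (simp add: Suc_in_lazy_gaps_iff)
    then show ?thesis using \<open>j \<le> K\<close> by (intro exI[of _ "Suc j"]) auto
  qed
  then show ?thesis by blast
qed

end

theorem proposition4p2:
  fixes q :: real
  assumes "0 < q" and "q < 1"
  shows "\<exists>S :: nat set. S \<noteq> {} \<and> has_specification (gap_shift S) \<and> has_entropy (gap_shift S) q"
proof -
  define r where "r = 2 powr (- q)"
  have r_gt: "1/2 < r" using assms powr_less_mono[of "-1" "-q" 2] by (simp add: r_def powr_minus)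
  have r_lt: "r < 1" using assms by (simp add: r_def powr_less_one)
  obtain D where "\<forall>t. \<exists>a<D. t + a \<in> lazy_gaps r" using lazy_gaps_syndetic[OF r_gt r_lt] by blast
  then have "has_specification (gap_shift (lazy_gaps r))"
    by (intro has_specification_gap_shift zero_in_lazy_gaps)
  moreover have "has_entropy (gap_shift (lazy_gaps r)) (- log 2 r)"
    using r_gt r_lt sum_lazy_gaps_le[OF r_gt r_lt] sum_lazy_gaps_ge[OF r_gt r_lt]
    by (intro has_entropy_gap_shift) auto
  moreover have "- log 2 r = q" by (simp add: r_def)
  ultimately show ?thesis using zero_in_lazy_gaps by blast
qed

end
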